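(* Let $\mathfrak{k}$ be a field, $n\ge2$, and ${\mathcal A}=(x_{i_1\ldots i_n})_{1\le i_j\le r_j}$ a box-shaped matrix of distinct indeterminates with polynomial ring $\mathfrak{k}[{\mathcal A}]$. Order the variables by $x_{i_1\ldots i_n}\le x_{j_1\ldots j_n}$ if and only if $(i_1,\dots,i_n)\le(j_1,\dots,j_n)$ in the lexicographic order on ${\mathbb N}^n$, and use the degree reverse lexicographic monomial order induced by this variable order. Then the set of all $2\times2$ minors of ${\mathcal A}$ is a Gröbner basis of $I_2({\mathcal A})$.
   Context: $\mathfrak{k}$ is algebraically closed of characteristic $0$. The $2\times2$ minors of a box-shaped matrix $(a_{i_1\ldots i_n})$ are $a_{i_1\ldots i_l\ldots i_n}a_{j_1\ldots j_l\ldots j_n}-a_{i_1\ldots i_{l-1}j_li_{l+1}\ldots i_n}a_{j_1\ldots j_{l-1}i_lj_{l+1}\ldots j_n}$ for any coordinate $l\in\{1,\dots,n\}$ and any two index points; $I_2({\mathcal A})$ is the ideal they generate. *)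

theory Defs
  imports "HOL-Library.Poly_Mapping"
begin

text \<open>Multivariate polynomials over a field in variables indexed by index points (nat lists); monomials and polynomials are finitely supported maps.\<close>

type_synonym mon = "nat list \<Rightarrow>\<^sub>0 nat"
type_synonym 'k mpoly = "mon \<Rightarrow>\<^sub>0 'k"

definition box :: "nat list \<Rightarrow> nat list set" where
  "box r = {i. length i = length r \<and> (\<forall>j<length r. 1 \<le> i ! j \<and> i ! j \<le> r ! j)}"

definition var :: "nat list \<Rightarrow> 'k::comm_ring_1 mpoly" where
  "var a = Poly_Mapping.single (Poly_Mapping.single a 1) 1"

definition poly_ring :: "nat list \<Rightarrow> 'k::comm_ring_1 mpoly set" where
  "poly_ring r = {p :: 'k mpoly. \<forall>m\<in>Poly_Mapping.keys p. Poly_Mapping.keys m \<subseteq> box r}"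

definition ideal_gen :: "'k::comm_ring_1 mpoly set \<Rightarrow> 'k mpoly set \<Rightarrow> 'k mpoly set" where
  "ideal_gen R G = {f. \<exists>S h. finite S \<and> S \<subseteq> G \<and> (\<forall>g\<in>S. h g \<in> R) \<and> f = (\<Sum>g\<in>S. h g * g)}"

definition minors2 :: "nat list \<Rightarrow> 'k::comm_ring_1 mpoly set" where
  "minors2 r = {var a * var b - var (a[l := b ! l]) * var (b[l := a ! l]) | a b l.
                  a \<in> box r \<and> b \<in> box r \<and> l < length r}"

definition I2 :: "nat list \<Rightarrow> 'k::comm_ring_1 mpoly set" where
  "I2 r = ideal_gen (poly_ring r) (minors2 r)"

definition lex_less :: "nat list \<Rightarrow> nat list \<Rightarrow> bool" where
  "lex_less a b \<longleftrightarrow> (\<exists>k<length a. k < length b \<and> take k a = take k b \<and> a ! k < b ! k)"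

definition mdeg :: "mon \<Rightarrow> nat" where
  "mdeg m = (\<Sum>v\<in>Poly_Mapping.keys m. Poly_Mapping.lookup m v)"

definition drl_less :: "nat list \<Rightarrow> mon \<Rightarrow> mon \<Rightarrow> bool" where
  "drl_less r m1 m2 \<longleftrightarrow> mdeg m1 < mdeg m2 \<or>
     (mdeg m1 = mdeg m2 \<and> (\<exists>v\<in>box r. Poly_Mapping.lookup m2 v < Poly_Mapping.lookup m1 v \<and>
        (\<forall>w\<in>box r. lex_less w v \<longrightarrow> Poly_Mapping.lookup m1 w = Poly_Mapping.lookup m2 w)))"

definition lead_mon :: "nat list \<Rightarrow> 'k::comm_ring_1 mpoly \<Rightarrow> mon" where
  "lead_mon r p = (THE m. m \<in> Poly_Mapping.keys p \<and> (\<forall>m'\<in>Poly_Mapping.keys p. m' \<noteq> m \<longrightarrow> drl_less r m' m))"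

definition mon_dvd :: "mon \<Rightarrow> mon \<Rightarrow> bool" where
  "mon_dvd a b \<longleftrightarrow> (\<forall>v. Poly_Mapping.lookup a v \<le> Poly_Mapping.lookup b v)"

definition groebner_basis :: "nat list \<Rightarrow> 'k::comm_ring_1 mpoly set \<Rightarrow> 'k mpoly set \<Rightarrow> bool" where
  "groebner_basis r G I \<longleftrightarrow> G \<subseteq> I \<and>
     (\<forall>f\<in>I. f \<noteq> 0 \<longrightarrow> (\<exists>g\<in>G. g \<noteq> 0 \<and> mon_dvd (lead_mon r g) (lead_mon r f)))"

end

theory Submission
  imports Defs "HOL-Library.List_Lexorder"
begin

text \<open>Give the variable x_a the multidegree e_(1,a_1) + ... + e_(n,a_n). Both terms of a 2x2
  minor have the same multidegree, so in every element of I_2 the coefficients of the monomials of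
  any fixed multidegree sum to zero. Hence the leading monomial of a nonzero f in I_2 shares its
  multidegree with another, drl-smaller monomial of f. On the other hand, a monomial whose
  variables form a chain for the componentwise order on index points is the drl-least monomial of
  its multidegree: at the first variable x_v where it differs from a competitor, some coordinate l
  separates v from all larger variables of the chain, and comparing the multidegree component
  (l, v_l) shows that the competitor has the smaller exponent of x_v. So the leading monomial
  contains two incomparable variables x_a, x_b with a <lex b and b_l < a_l for some l, and x_a x_b
  is the leading monomial of the minor obtained by exchanging their l-th indices.\<close>

abbreviation lookup :: "('a \<Rightarrow>\<^sub>0 'b::zero) \<Rightarrow> 'a \<Rightarrow> 'b" where
  "lookup \<equiv> Poly_Mapping.lookup"

abbreviation keys :: "('a \<Rightarrow>\<^sub>0 'b::zero) \<Rightarrow> 'a set" where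
  "keys \<equiv> Poly_Mapping.keys"

abbreviation single :: "'a \<Rightarrow> 'b \<Rightarrow> 'a \<Rightarrow>\<^sub>0 'b::zero" where
  "single \<equiv> Poly_Mapping.single"

lemma length_box: "a \<in> box r \<Longrightarrow> length a = length r"
  by (simp add: box_def)

lemma finite_box: "finite (box r)"
proof (rule finite_subset)
  show "box r \<subseteq> {xs. set xs \<subseteq> {0..Max (set r)} \<and> length xs = length r}"
  proof (clarsimp simp: length_box)
    fix xs x assume xs: "xs \<in> box r" and "x \<in> set xs"
    then obtain j where j: "j < length r" "xs ! j = x"
      by (auto simp: in_set_conv_nth length_box)
    then have "x \<le> r ! j" using xs by (auto simp: box_def)
    also have "\<dots> \<le> Max (set r)" using j(1) by simp
    finally show "x \<le> Max (set r)" .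
  qed
qed (rule finite_lists_length_eq, simp)

lemma list_update_in_box:
  assumes "a \<in> box r" "b \<in> box r" "l < length r"
  shows "a[l := b ! l] \<in> box r"
  using assms by (auto simp: box_def nth_list_update)

lemma lex_less_iff_less: "length a = length b \<Longrightarrow> lex_less a b \<longleftrightarrow> a < b"
  unfolding lex_less_def list_less_def lexord_take_index_conv by auto

definition componentwise_le :: "nat list \<Rightarrow> nat list \<Rightarrow> bool" where
  "componentwise_le a b \<longleftrightarrow> (\<forall>l<length a. a ! l \<le> b ! l)"

lemma componentwise_le_refl: "componentwise_le a a"
  by (simp add: componentwise_le_def)

lemma componentwise_le_imp_less_eq:
  assumes "length a = length b" "componentwise_le a b"
  shows "a \<le> b"
proof (rule ccontr)
  assume "\<not> a \<le> b"
  then have "lex_less b a" using lex_less_iff_less assms(1) by simp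
  then obtain k where "k < length a" "b ! k < a ! k"
    unfolding lex_less_def by blast
  then show False using assms(2) unfolding componentwise_le_def by fastforce
qed

text \<open>The least element w of a componentwise chain lies componentwise below all others, so the
  coordinate at which v first falls lexicographically below w separates v from the whole chain.\<close>
lemma chain_separating_coordinate:
  assumes "finite S" "0 < n" "length v = n" "\<forall>a\<in>S. length a = n" "\<forall>a\<in>S. v < a"
    and chain: "\<forall>a\<in>S. \<forall>b\<in>S. componentwise_le a b \<or> componentwise_le b a"
  obtains l where "l < n" "\<forall>a\<in>S. v ! l < a ! l"
proof (cases "S = {}")
  case True
  then show ?thesis using that assms(2) by blast
next
  case False
  define w where "w = Min S"
  have w: "w \<in> S" unfolding w_def using Min_in[OF assms(1) False] .
  then have "lex_less v w" using assms(3-5) lex_less_iff_less by simp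
  then obtain k where k: "k < n" "v ! k < w ! k"
    unfolding lex_less_def using assms(3) by blast
  have "w ! k \<le> a ! k" if a: "a \<in> S" for a
  proof -
    have "componentwise_le w a"
    proof (cases "componentwise_le a w")
      case True
      then have "a \<le> w" using componentwise_le_imp_less_eq assms(4) a w by simp
      moreover have "w \<le> a" unfolding w_def using Min_le[OF assms(1) a] .
      ultimately show ?thesis by (simp add: componentwise_le_refl)
    qed (use chain a w in blast)
    then show ?thesis using k(1) assms(4) w unfolding componentwise_le_def by simp
  qed
  then show ?thesis using that k by fastforce
qed

subsection \<open>The degree reverse lexicographic order\<close>

definition box_monomial :: "nat list \<Rightarrow> mon \<Rightarrow> bool" where
  "box_monomial r m \<longleftrightarrow> keys m \<subseteq> box r"

lemma drl_less_iff:
  "drl_less r m1 m2 \<longleftrightarrow> mdeg m1 < mdeg m2 \<or>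
     (mdeg m1 = mdeg m2 \<and> (\<exists>v\<in>box r. lookup m2 v < lookup m1 v \<and>
        (\<forall>w\<in>box r. w < v \<longrightarrow> lookup m1 w = lookup m2 w)))"
proof -
  have "lex_less w v \<longleftrightarrow> w < v" if "v \<in> box r" "w \<in> box r" for v w
    using that by (simp add: lex_less_iff_less length_box)
  then show ?thesis unfolding drl_less_def by (intro disj_cong refl conj_cong bex_cong) blast+
qed

lemma drl_less_irrefl: "\<not> drl_less r m m"
  by (simp add: drl_less_def)

lemma drl_less_trans:
  assumes "drl_less r m1 m2" "drl_less r m2 m3"
  shows "drl_less r m1 m3"
proof (cases "mdeg m1 < mdeg m2 \<or> mdeg m2 < mdeg m3")
  case True
  then show ?thesis using assms unfolding drl_less_iff by auto
next
  case False
  then obtain v1 where v1: "v1 \<in> box r" "lookup m2 v1 < lookup m1 v1"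
      "\<forall>w\<in>box r. w < v1 \<longrightarrow> lookup m1 w = lookup m2 w" and d1: "mdeg m1 = mdeg m2"
    using assms(1) unfolding drl_less_iff by auto
  obtain v2 where v2: "v2 \<in> box r" "lookup m3 v2 < lookup m2 v2"
      "\<forall>w\<in>box r. w < v2 \<longrightarrow> lookup m2 w = lookup m3 w" and d2: "mdeg m2 = mdeg m3"
    using assms(2) False unfolding drl_less_iff by auto
  define v where "v = min v1 v2"
  have "v \<in> box r" using v1(1) v2(1) by (simp add: v_def min_def)
  moreover have "lookup m3 v < lookup m1 v"
    using v1 v2 by (cases v1 v2 rule: linorder_cases) (auto simp: v_def)
  moreover have "\<forall>w\<in>box r. w < v \<longrightarrow> lookup m1 w = lookup m3 w"
    using v1(3) v2(3) by (simp add: v_def)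
  ultimately show ?thesis unfolding drl_less_iff using d1 d2 by auto
qed

lemma drl_less_asym: "drl_less r m1 m2 \<Longrightarrow> \<not> drl_less r m2 m1"
  using drl_less_trans drl_less_irrefl by blast

lemma box_monomials_first_difference:
  assumes "box_monomial r m1" "box_monomial r m2" "m1 \<noteq> m2"
  obtains v where "v \<in> box r" "lookup m1 v \<noteq> lookup m2 v"
    "\<forall>w\<in>box r. w < v \<longrightarrow> lookup m1 w = lookup m2 w"
proof -
  define D where "D = {v\<in>box r. lookup m1 v \<noteq> lookup m2 v}"
  have fin: "finite D" unfolding D_def using finite_box by simp
  obtain v where v: "lookup m1 v \<noteq> lookup m2 v"
    using assms(3) poly_mapping_eqI by meson
  then have "v \<in> keys m1 \<union> keys m2" by (auto simp: in_keys_iff)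
  then have "v \<in> D" using v assms(1,2) unfolding D_def box_monomial_def by blast
  then have "D \<noteq> {}" by blast
  then have "Min D \<in> D" and min_le: "\<And>w. w \<in> D \<Longrightarrow> Min D \<le> w" using fin by simp_all
  moreover have "lookup m1 w = lookup m2 w" if "w \<in> box r" "w < Min D" for w
  proof (rule ccontr)
    assume "lookup m1 w \<noteq> lookup m2 w"
    then have "Min D \<le> w" using min_le that(1) by (simp add: D_def)
    then show False using that(2) by simp
  qed
  ultimately show ?thesis using that[of "Min D"] unfolding D_def by blast
qed

lemma drl_less_total:
  assumes "box_monomial r m1" "box_monomial r m2" "m1 \<noteq> m2"
  shows "drl_less r m1 m2 \<or> drl_less r m2 m1"
proof (cases "mdeg m1 = mdeg m2")
  case True
  obtain v where v: "v \<in> box r" "lookup m1 v \<noteq> lookup m2 v"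
      and below: "\<forall>w\<in>box r. w < v \<longrightarrow> lookup m1 w = lookup m2 w"
    using box_monomials_first_difference[OF assms] .
  from v(2) consider "lookup m2 v < lookup m1 v" | "lookup m1 v < lookup m2 v" by linarith
  then show ?thesis
  proof cases
    case 1
    then have "drl_less r m1 m2" unfolding drl_less_iff using True v(1) below by blast
    then show ?thesis ..
  next
    case 2
    have "\<forall>w\<in>box r. w < v \<longrightarrow> lookup m2 w = lookup m1 w" using below by simp
    then have "drl_less r m2 m1" unfolding drl_less_iff using True 2 v(1) by auto
    then show ?thesis ..
  qed
qed (auto simp: drl_less_def)

lemma exists_drl_greatest:
  assumes "finite S" "S \<noteq> {}" "\<forall>m\<in>S. box_monomial r m"
  shows "\<exists>m\<in>S. \<forall>m'\<in>S. m' \<noteq> m \<longrightarrow> drl_less r m' m"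
  using assms
proof (induction S rule: finite_ne_induct)
  case (insert x F)
  then obtain m where m: "m \<in> F" "\<forall>m'\<in>F. m' \<noteq> m \<longrightarrow> drl_less r m' m" by auto
  have "x \<noteq> m" using m insert by auto
  then consider "drl_less r x m" | "drl_less r m x"
    using drl_less_total insert.prems m(1) by blast
  then show ?case
  proof cases
    case 1
    then show ?thesis using m by blast
  next
    case 2
    then have "\<forall>m'\<in>insert x F. m' \<noteq> x \<longrightarrow> drl_less r m' x"
      using m(2) drl_less_trans[of r _ m x] by auto
    then show ?thesis by blast
  qed
qed blast

lemma lead_mon_eqI:
  assumes "m \<in> keys p" "\<forall>m'\<in>keys p. m' \<noteq> m \<longrightarrow> drl_less r m' m"
  shows "lead_mon r p = m"
  unfolding lead_mon_def
proof (rule the_equality)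
  fix m1 assume m1: "m1 \<in> keys p \<and> (\<forall>m'\<in>keys p. m' \<noteq> m1 \<longrightarrow> drl_less r m' m1)"
  show "m1 = m"
  proof (rule ccontr)
    assume "m1 \<noteq> m"
    then have "drl_less r m1 m" "drl_less r m m1" using m1 assms by auto
    then show False using drl_less_asym by blast
  qed
qed (use assms in simp)

lemma lead_mon_greatest:
  assumes "p \<noteq> 0" "\<forall>m\<in>keys p. box_monomial r m"
  shows "lead_mon r p \<in> keys p" "\<forall>m'\<in>keys p. m' \<noteq> lead_mon r p \<longrightarrow> drl_less r m' (lead_mon r p)"
proof -
  obtain m where "m \<in> keys p" "\<forall>m'\<in>keys p. m' \<noteq> m \<longrightarrow> drl_less r m' m"
    using exists_drl_greatest[of "keys p" r] assms by auto
  moreover from this have "lead_mon r p = m" by (rule lead_mon_eqI)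
  ultimately show "lead_mon r p \<in> keys p"
    "\<forall>m'\<in>keys p. m' \<noteq> lead_mon r p \<longrightarrow> drl_less r m' (lead_mon r p)" by simp_all
qed

lemma poly_ring_iff: "p \<in> poly_ring r \<longleftrightarrow> (\<forall>m\<in>keys p. box_monomial r m)"
  by (simp add: poly_ring_def box_monomial_def)

lemma poly_ring_mult:
  assumes "p \<in> poly_ring r" "q \<in> poly_ring r"
  shows "p * q \<in> poly_ring r"
  unfolding poly_ring_def
proof (intro CollectI ballI)
  fix m assume "m \<in> keys (p * q)"
  then obtain a b where ab: "m = a + b" "a \<in> keys p" "b \<in> keys q" using keys_mult by blast
  have "keys m \<subseteq> keys a \<union> keys b" unfolding ab(1) by (rule keys_add)
  also have "\<dots> \<subseteq> box r" using assms ab(2,3) unfolding poly_ring_def by blast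
  finally show "keys m \<subseteq> box r" .
qed

lemma poly_ring_sum:
  assumes "\<And>g. g \<in> S \<Longrightarrow> f g \<in> poly_ring r"
  shows "sum f S \<in> poly_ring r"
  unfolding poly_ring_def
proof (intro CollectI ballI)
  fix m assume "m \<in> keys (sum f S)"
  then obtain g where "g \<in> S" "m \<in> keys (f g)" using keys_sum[of f S] by blast
  then show "keys m \<subseteq> box r" using assms unfolding poly_ring_def by blast
qed

lemma var_mult_var:
  "(var a * var b :: 'k::comm_ring_1 mpoly) = single (single a 1 + single b 1) 1"
  by (simp add: var_def mult_single)

lemma lookup_single_add_single:
  "lookup (single a (1::nat) + single b 1) w = (if w = a then 1 else 0) + (if w = b then 1 else 0)"
  by (simp add: lookup_add lookup_single when_def)

lemma keys_single_add_single: "keys (single a (1::nat) + single b 1) = {a, b}"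
  by (auto simp: in_keys_iff lookup_add lookup_single when_def split: if_splits)

lemma minor_in_poly_ring:
  assumes "a \<in> box r" "b \<in> box r" "c \<in> box r" "d \<in> box r"
  shows "(var a * var b - var c * var d :: 'k::comm_ring_1 mpoly) \<in> poly_ring r"
proof -
  have "keys (var a * var b - var c * var d :: 'k mpoly) \<subseteq>
      keys (var a * var b :: 'k mpoly) \<union> keys (var c * var d :: 'k mpoly)"
    by (rule keys_diff)
  also have "\<dots> = {single a 1 + single b 1, single c 1 + single d 1}"
    by (auto simp: var_mult_var)
  finally have keys_minor: "keys (var a * var b - var c * var d :: 'k mpoly) \<subseteq>
      {single a 1 + single b 1, single c 1 + single d 1}" .
  show ?thesis unfolding poly_ring_def
  proof (intro CollectI ballI)
    fix m assume "m \<in> keys (var a * var b - var c * var d :: 'k mpoly)"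
    then have "keys m \<subseteq> {a, b} \<or> keys m \<subseteq> {c, d}"
      using keys_minor keys_single_add_single[of a b] keys_single_add_single[of c d] by auto
    then show "keys m \<subseteq> box r" using assms by blast
  qed
qed

lemma minors2_subset_poly_ring: "minors2 r \<subseteq> (poly_ring r :: 'k::comm_ring_1 mpoly set)"
proof
  fix g :: "'k mpoly" assume "g \<in> minors2 r"
  then obtain a b l where "g = var a * var b - var (a[l := b ! l]) * var (b[l := a ! l])"
    and "a \<in> box r" "b \<in> box r" "l < length r" unfolding minors2_def by blast
  then show "g \<in> poly_ring r" by (simp add: minor_in_poly_ring list_update_in_box)
qed

lemma I2_subset_poly_ring: "I2 r \<subseteq> (poly_ring r :: 'k::comm_ring_1 mpoly set)"
proof
  fix f :: "'k mpoly" assume "f \<in> I2 r"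
  then obtain S h where S: "S \<subseteq> minors2 r" "\<forall>g\<in>S. h g \<in> poly_ring r" "f = (\<Sum>g\<in>S. h g * g)"
    unfolding I2_def ideal_gen_def by blast
  have "h g * g \<in> poly_ring r" if "g \<in> S" for g
    using S(1,2) that minors2_subset_poly_ring poly_ring_mult by blast
  then show "f \<in> poly_ring r" unfolding S(3) by (rule poly_ring_sum)
qed

lemma minors2_subset_I2: "minors2 r \<subseteq> (I2 r :: 'k::comm_ring_1 mpoly set)"
proof
  fix g :: "'k mpoly" assume g: "g \<in> minors2 r"
  have "g = (\<Sum>g'\<in>{g}. 1 * g')" by simp
  moreover have "(1 :: 'k mpoly) \<in> poly_ring r" by (simp add: poly_ring_def)
  ultimately show "g \<in> I2 r" unfolding I2_def ideal_gen_def using g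
    by (intro CollectI exI[of _ "{g}"] exI[of _ "\<lambda>_. 1"]) simp
qed

subsection \<open>The multigrading\<close>

text \<open>multideg m l x is the component (l, x) of the multidegree of m.\<close>
definition multideg :: "mon \<Rightarrow> nat \<Rightarrow> nat \<Rightarrow> nat" where
  "multideg m l x = (\<Sum>a\<in>{a\<in>keys m. a ! l = x}. lookup m a)"

lemma multideg_superset:
  "finite A \<Longrightarrow> keys m \<subseteq> A \<Longrightarrow> multideg m l x = (\<Sum>a\<in>{a\<in>A. a ! l = x}. lookup m a)"
  unfolding multideg_def by (rule sum.mono_neutral_left) (auto simp: in_keys_iff)

lemma multideg_add: "multideg (m1 + m2) l x = multideg m1 l x + multideg m2 l x"
proof -
  let ?A = "keys m1 \<union> keys m2"
  have "multideg (m1 + m2) l x = (\<Sum>a\<in>{a\<in>?A. a ! l = x}. lookup (m1 + m2) a)"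
    by (rule multideg_superset[OF _ keys_add]) simp
  also have "\<dots> = (\<Sum>a\<in>{a\<in>?A. a ! l = x}. lookup m1 a) +
      (\<Sum>a\<in>{a\<in>?A. a ! l = x}. lookup m2 a)"
    by (simp add: lookup_add sum.distrib)
  also have "\<dots> = multideg m1 l x + multideg m2 l x"
    using multideg_superset[of ?A] by simp
  finally show ?thesis .
qed

lemma multideg_single: "multideg (single a (1::nat)) l x = (if a ! l = x then 1 else 0)"
proof -
  have "{a'\<in>keys (single a (1::nat)). a' ! l = x} = (if a ! l = x then {a} else {})" by auto
  then show ?thesis unfolding multideg_def by simp
qed

lemma multideg_exchange_index:
  assumes "a \<in> box r" "b \<in> box r" "L < length r"
  shows "multideg (single a 1 + single b 1) =
    multideg (single (a[L := b ! L]) 1 + single (b[L := a ! L]) 1)"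
proof (intro ext)
  fix l x
  have "L < length a" "L < length b" using assms length_box by auto
  then show "multideg (single a 1 + single b 1) l x =
      multideg (single (a[L := b ! L]) 1 + single (b[L := a ! L]) 1) l x"
    unfolding multideg_add multideg_single by (cases "l = L") simp_all
qed

lemma mdeg_eq_sum_multideg:
  "box_monomial r m \<Longrightarrow> mdeg m = (\<Sum>x\<in>(\<lambda>a. a ! 0) ` box r. multideg m 0 x)"
  unfolding box_monomial_def
  using sum.image_gen[OF finite_box, of "lookup m" r "\<lambda>a. a ! 0"]
  by (simp add: mdeg_def multideg_superset[OF finite_box] sum.mono_neutral_left[OF finite_box]
      in_keys_iff)

definition multideg_coeff_sum :: "(nat \<Rightarrow> nat \<Rightarrow> nat) \<Rightarrow> 'k::comm_ring_1 mpoly \<Rightarrow> 'k" where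
  "multideg_coeff_sum d p = (\<Sum>m\<in>{m\<in>keys p. multideg m = d}. lookup p m)"

lemma multideg_coeff_sum_superset:
  "finite A \<Longrightarrow> keys p \<subseteq> A \<Longrightarrow>
    multideg_coeff_sum d p = (\<Sum>m\<in>{m\<in>A. multideg m = d}. lookup p m)"
  unfolding multideg_coeff_sum_def by (rule sum.mono_neutral_left) (auto simp: in_keys_iff)

lemma multideg_coeff_sum_add:
  "multideg_coeff_sum d (p + q) = multideg_coeff_sum d p + multideg_coeff_sum d q"
proof -
  let ?A = "keys p \<union> keys q"
  have "multideg_coeff_sum d (p + q) = (\<Sum>m\<in>{m\<in>?A. multideg m = d}. lookup (p + q) m)"
    by (rule multideg_coeff_sum_superset[OF _ keys_add]) simp
  also have "\<dots> = (\<Sum>m\<in>{m\<in>?A. multideg m = d}. lookup p m) +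
      (\<Sum>m\<in>{m\<in>?A. multideg m = d}. lookup q m)"
    by (simp add: lookup_add sum.distrib)
  also have "\<dots> = multideg_coeff_sum d p + multideg_coeff_sum d q"
    using multideg_coeff_sum_superset[of ?A, OF _ Un_upper1]
      multideg_coeff_sum_superset[of ?A, OF _ Un_upper2] by simp
  finally show ?thesis .
qed

lemma multideg_coeff_sum_diff:
  "multideg_coeff_sum d (p - q) = multideg_coeff_sum d p - multideg_coeff_sum d q"
  using multideg_coeff_sum_add[of d "p - q" q] by (simp add: eq_diff_eq)

lemma multideg_coeff_sum_sum:
  "multideg_coeff_sum d (sum f S) = (\<Sum>i\<in>S. multideg_coeff_sum d (f i))"
proof (induction S rule: infinite_finite_induct)
  case (insert i S)
  then show ?case by (simp add: multideg_coeff_sum_add)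
qed (simp_all add: multideg_coeff_sum_def)

lemma multideg_coeff_sum_single:
  "multideg_coeff_sum d (single m c) = (if multideg m = d then c else 0)"
proof -
  have "{m'\<in>{m}. multideg m' = d} = (if multideg m = d then {m} else {})" by auto
  then show ?thesis by (simp add: multideg_coeff_sum_superset[of "{m}"])
qed

lemma sum_single_lookup: "p = (\<Sum>m\<in>keys p. single m (lookup p m))"
  by (rule poly_mapping_eqI) (simp add: lookup_sum lookup_single when_def sum.delta' in_keys_iff)

lemma multideg_coeff_sum_mult_single:
  "multideg_coeff_sum d (h * single \<mu> 1) =
    (\<Sum>m\<in>keys h. if (\<lambda>l x. multideg m l x + multideg \<mu> l x) = d then lookup h m else 0)"
proof -
  have "h * single \<mu> 1 = (\<Sum>m\<in>keys h. single (m + \<mu>) (lookup h m))"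
    by (subst sum_single_lookup[of h]) (simp add: sum_distrib_right mult_single)
  moreover have "multideg (m + \<mu>) = (\<lambda>l x. multideg m l x + multideg \<mu> l x)" for m
    by (intro ext) (rule multideg_add)
  ultimately show ?thesis by (simp add: multideg_coeff_sum_sum multideg_coeff_sum_single)
qed

lemma multideg_coeff_sum_mult_binomial:
  "multideg \<mu>1 = multideg \<mu>2 \<Longrightarrow> multideg_coeff_sum d (h * (single \<mu>1 1 - single \<mu>2 1)) = 0"
  by (simp add: right_diff_distrib multideg_coeff_sum_diff multideg_coeff_sum_mult_single)

lemma multideg_coeff_sum_I2:
  assumes "f \<in> (I2 r :: 'k::comm_ring_1 mpoly set)"
  shows "multideg_coeff_sum d f = 0"
proof -
  obtain S h where S: "S \<subseteq> minors2 r" "f = (\<Sum>g\<in>S. h g * g)"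
    using assms unfolding I2_def ideal_gen_def by blast
  have "multideg_coeff_sum d (h g * g) = 0" if "g \<in> minors2 r" for g
  proof -
    obtain a b l where g: "g = var a * var b - var (a[l := b ! l]) * var (b[l := a ! l])"
      and ab: "a \<in> box r" "b \<in> box r" "l < length r"
      using \<open>g \<in> minors2 r\<close> unfolding minors2_def by blast
    show ?thesis unfolding g var_mult_var
      by (rule multideg_coeff_sum_mult_binomial) (rule multideg_exchange_index[OF ab])
  qed
  then show ?thesis using S by (simp add: multideg_coeff_sum_sum subset_iff)
qed

lemma I2_multideg_partner:
  assumes "f \<in> (I2 r :: 'k::comm_ring_1 mpoly set)" "m \<in> keys f"
  shows "\<exists>m'\<in>keys f. m' \<noteq> m \<and> multideg m' = multideg m"
proof (rule ccontr)
  assume "\<not> ?thesis"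
  then have "{m'\<in>keys f. multideg m' = multideg m} = {m}" using assms(2) by auto
  then have "multideg_coeff_sum (multideg m) f = lookup f m"
    unfolding multideg_coeff_sum_def by simp
  then show False using multideg_coeff_sum_I2[OF assms(1)] assms(2) by (simp add: in_keys_iff)
qed

subsection \<open>Chain monomials and leading monomials of minors\<close>

lemma multideg_less_at_first_difference:
  assumes m: "box_monomial r m" and m': "box_monomial r m'"
    and v: "v \<in> box r" "lookup m v < lookup m' v"
    and below: "\<forall>w\<in>box r. w < v \<longrightarrow> lookup m w = lookup m' w"
    and separated: "\<forall>a\<in>keys m. v < a \<longrightarrow> a ! l \<noteq> v ! l"
  shows "multideg m l (v ! l) < multideg m' l (v ! l)"
proof -
  define B where "B = {a\<in>box r. a ! l = v ! l}"
  define L where "L = {a. a < v}"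
  have fin: "finite B" unfolding B_def using finite_box by simp
  have vB: "v \<in> B - L" unfolding B_def L_def using v(1) by simp
  have split: "multideg \<nu> l (v ! l) = (\<Sum>a\<in>B \<inter> L. lookup \<nu> a) + (\<Sum>a\<in>B - L. lookup \<nu> a)"
    if "box_monomial r \<nu>" for \<nu>
  proof -
    have "multideg \<nu> l (v ! l) = (\<Sum>a\<in>B. lookup \<nu> a)"
      using that unfolding box_monomial_def B_def by (rule multideg_superset[OF finite_box])
    then show ?thesis by (simp add: sum.Int_Diff[OF fin])
  qed
  have "lookup m a = 0" if "a \<in> B - L - {v}" for a
  proof -
    have "\<not> a < v" "a \<noteq> v" "a ! l = v ! l" using that by (auto simp: B_def L_def)
    then have "a \<notin> keys m" using separated by (meson linorder_neqE)
    then show ?thesis by (simp add: in_keys_iff)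
  qed
  then have "(\<Sum>a\<in>B - L. lookup m a) = lookup m v"
    using sum.remove[OF _ vB, of "lookup m"] fin by simp
  also have "\<dots> < lookup m' v" by (rule v(2))
  also have "\<dots> \<le> (\<Sum>a\<in>B - L. lookup m' a)" by (rule member_le_sum) (use vB fin in auto)
  finally show ?thesis
    unfolding split[OF m] split[OF m'] using below by (simp add: B_def L_def)
qed

lemma chain_monomial_drl_least:
  assumes m: "box_monomial r m" and m': "box_monomial r m'" "m \<noteq> m'"
    and same: "multideg m = multideg m'" and "0 < length r"
    and chain: "\<forall>a\<in>keys m. \<forall>b\<in>keys m. componentwise_le a b \<or> componentwise_le b a"
  shows "drl_less r m m'"
proof -
  obtain v where v: "v \<in> box r" "lookup m v \<noteq> lookup m' v"
      and below: "\<forall>w\<in>box r. w < v \<longrightarrow> lookup m w = lookup m' w"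
    using box_monomials_first_difference[OF m m'] .
  have "lookup m' v < lookup m v"
  proof (rule ccontr)
    assume "\<not> ?thesis"
    with v(2) have less: "lookup m v < lookup m' v" by linarith
    have "keys m \<subseteq> box r" using m by (simp add: box_monomial_def)
    obtain l where "l < length r" and separating: "\<forall>a\<in>{a\<in>keys m. v < a}. v ! l < a ! l"
      by (rule chain_separating_coordinate[of "{a\<in>keys m. v < a}" "length r" v])
        (use \<open>keys m \<subseteq> box r\<close> assms(5) chain v(1) in \<open>auto simp: length_box\<close>)
    have "\<forall>a\<in>keys m. v < a \<longrightarrow> a ! l \<noteq> v ! l" using separating by fastforce
    then have "multideg m l (v ! l) < multideg m' l (v ! l)"
      by (rule multideg_less_at_first_difference[OF m m'(1) v(1) less below])
    then show False using same by simp
  qed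
  moreover have "mdeg m = mdeg m'"
    using mdeg_eq_sum_multideg[OF m] mdeg_eq_sum_multideg[OF m'(1)] same by simp
  ultimately show ?thesis unfolding drl_less_iff using v(1) below by blast
qed

lemma lead_mon_minor:
  assumes ab: "a \<in> box r" "b \<in> box r" "a < b" and l: "l < length r" "b ! l < a ! l"
  defines "g \<equiv> var a * var b - var (a[l := b ! l]) * var (b[l := a ! l]) :: 'k::comm_ring_1 mpoly"
  shows "g \<noteq> 0" "lead_mon r g = single a 1 + single b 1"
proof -
  define a' b' where "a' = a[l := b ! l]" and "b' = b[l := a ! l]"
  have len: "length a = length r" "length b = length r" using ab length_box by auto
  have a'_box: "a' \<in> box r" and b'_box: "b' \<in> box r"
    unfolding a'_def b'_def using list_update_in_box ab l by blast+
  obtain k where k: "k < length r" "take k a = take k b" "a ! k < b ! k"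
    using \<open>a < b\<close> lex_less_iff_less[of a b] len unfolding lex_less_def by auto
  have "k < l" using k(2,3) l(2) by (metis linorder_neqE_nat less_asym nth_take)
  have "lex_less a' a"
    unfolding lex_less_def a'_def using l len by (intro exI[of _ l]) simp
  then have "a' < a" using lex_less_iff_less a'_box len length_box by metis
  have "lex_less a b'"
    unfolding lex_less_def b'_def using k \<open>k < l\<close> len by (intro exI[of _ k]) simp
  then have "a < b'" using lex_less_iff_less b'_box len length_box by metis
  define M1 M2 where "M1 = single a (1::nat) + single b 1"
    and "M2 = single a' (1::nat) + single b' 1"
  have M2_M1: "drl_less r M2 M1"
  proof -
    have "mdeg M1 = 2" "mdeg M2 = 2"
      unfolding M1_def M2_def mdeg_def keys_single_add_single lookup_single_add_single
      using \<open>a' < a\<close> \<open>a < b\<close> \<open>a < b'\<close> by simp_all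
    moreover have "\<forall>w\<in>box r. w < a' \<longrightarrow> lookup M2 w = lookup M1 w"
      "lookup M1 a' < lookup M2 a'"
      unfolding M1_def M2_def lookup_single_add_single
      using \<open>a' < a\<close> \<open>a < b\<close> \<open>a < b'\<close> by auto
    ultimately show ?thesis unfolding drl_less_iff using a'_box by auto
  qed
  have g: "g = single M1 1 - single M2 1"
    unfolding g_def M1_def M2_def a'_def b'_def var_mult_var ..
  have "M1 \<noteq> M2" using M2_M1 drl_less_irrefl by metis
  then have "lookup g M1 = 1" by (simp add: g lookup_minus lookup_single when_def)
  then have "M1 \<in> keys g" by (simp add: in_keys_iff)
  then show "g \<noteq> 0" by auto
  have "keys g \<subseteq> {M1, M2}" unfolding g by (rule order_trans[OF keys_diff]) simp
  then show "lead_mon r g = single a 1 + single b 1"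
    unfolding M1_def[symmetric] using \<open>M1 \<in> keys g\<close> M2_M1 by (intro lead_mon_eqI) auto
qed

lemma mon_dvd_single_add_single:
  "a \<noteq> b \<Longrightarrow> a \<in> keys \<mu> \<Longrightarrow> b \<in> keys \<mu> \<Longrightarrow> mon_dvd (single a 1 + single b 1) \<mu>"
  unfolding mon_dvd_def lookup_single_add_single by (auto simp: in_keys_iff)

lemma incomparable_pair_divisible_by_lead_minor:
  assumes "a \<in> keys \<mu>" "b \<in> keys \<mu>" "a \<in> box r" "b \<in> box r"
    and "\<not> componentwise_le a b" "\<not> componentwise_le b a"
  shows "\<exists>g\<in>(minors2 r :: 'k::comm_ring_1 mpoly set). g \<noteq> 0 \<and> mon_dvd (lead_mon r g) \<mu>"
proof -
  have *: "\<exists>g\<in>(minors2 r :: 'k mpoly set). g \<noteq> 0 \<and> mon_dvd (lead_mon r g) \<mu>"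
    if ab: "a \<in> keys \<mu>" "b \<in> keys \<mu>" "a \<in> box r" "b \<in> box r" "a < b"
      "\<not> componentwise_le a b" for a b
  proof -
    obtain l where l: "l < length r" "b ! l < a ! l"
      using ab(3,6) by (auto simp: componentwise_le_def length_box not_le)
    let ?g = "var a * var b - var (a[l := b ! l]) * var (b[l := a ! l]) :: 'k mpoly"
    have "?g \<in> minors2 r" using ab(3,4) l(1) unfolding minors2_def by blast
    then show ?thesis using lead_mon_minor[OF ab(3-5) l] mon_dvd_single_add_single ab(1,2,5)
      by (metis less_irrefl)
  qed
  have "a \<noteq> b" using assms(5) componentwise_le_refl by blast
  then consider "a < b" | "b < a" by fastforce
  then show ?thesis using *[of a b] *[of b a] assms by cases blast+
qed

theorem theorem1p11:
  fixes r :: "nat list"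
  assumes "length r \<ge> 2"
  shows "groebner_basis r (minors2 r :: 'k::field mpoly set) (I2 r)"
  unfolding groebner_basis_def
proof (intro conjI ballI impI)
  show "minors2 r \<subseteq> I2 r" by (rule minors2_subset_I2)
next
  fix f :: "'k mpoly" assume f: "f \<in> I2 r" "f \<noteq> 0"
  define \<mu> where "\<mu> = lead_mon r f"
  have box: "\<forall>m\<in>keys f. box_monomial r m" using f(1) I2_subset_poly_ring poly_ring_iff by blast
  note lead = lead_mon_greatest[OF f(2) box, folded \<mu>_def]
  obtain \<mu>' where \<mu>': "\<mu>' \<in> keys f" "\<mu>' \<noteq> \<mu>" "multideg \<mu>' = multideg \<mu>"
    using I2_multideg_partner[OF f(1) lead(1)] by blast
  have "\<not> (\<forall>a\<in>keys \<mu>. \<forall>b\<in>keys \<mu>. componentwise_le a b \<or> componentwise_le b a)"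
  proof
    assume "\<forall>a\<in>keys \<mu>. \<forall>b\<in>keys \<mu>. componentwise_le a b \<or> componentwise_le b a"
    moreover have "0 < length r" using assms by linarith
    ultimately have "drl_less r \<mu> \<mu>'"
      using chain_monomial_drl_least box lead(1) \<mu>' by metis
    then show False using lead(2) \<mu>' drl_less_asym by blast
  qed
  then obtain a b where "a \<in> keys \<mu>" "b \<in> keys \<mu>"
    "\<not> componentwise_le a b" "\<not> componentwise_le b a" by blast
  moreover have "keys \<mu> \<subseteq> box r" using box lead(1) by (simp add: box_monomial_def)
  ultimately show "\<exists>g\<in>minors2 r. g \<noteq> 0 \<and> mon_dvd (lead_mon r g) (lead_mon r f)"
    unfolding \<mu>_def[symmetric] using incomparable_pair_divisible_by_lead_minor by blast
qed

end
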